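(* Let $k\ge 2$ and let $p,q$ be real polynomials with $\deg p=k$, $\deg q=k-1$, whose roots are all real and simple and strictly interlace: $p_1<q_1<p_2<q_2<\dots<q_{k-1}<p_k$, where $p_1<\dots<p_k$ are the roots of $p$ and $q_1<\dots<q_{k-1}$ those of $q$. Then every root of the Wronskian $W(p,q)=p'q-q'p$ lies in the set $\Omega_p=\overline{D_0}\setminus\bigcup_{j=1}^{k-1}D_j$.
   Context: For $j=1,\dots,k-1$, $D_j\subset\mathbb{C}$ denotes the open disk whose boundary circle $C_j$ has the segment $[p_j,p_{j+1}]$ as a diameter (center $\frac{p_j+p_{j+1}}2$, radius $\frac{p_{j+1}-p_j}2$); $D_0$ denotes the open disk whose boundary circle $C_0$ has $[p_1,p_k]$ as a diameter; $\overline{D_0}$ is its closure. *)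

theory Defs
  imports "HOL-Analysis.Analysis" "HOL-Computational_Algebra.Polynomial"
begin

definition wronskian :: "real poly \<Rightarrow> real poly \<Rightarrow> real poly" where
  "wronskian p q = pderiv p * q - pderiv q * p"

definition diam_disk :: "real \<Rightarrow> real \<Rightarrow> complex set" where
  "diam_disk a b = ball (complex_of_real ((a + b) / 2)) ((b - a) / 2)"

text \<open>Omega_p = closure(D_0) minus union of D_j, roots indexed 1..k.\<close>
definition Omega :: "nat \<Rightarrow> (nat \<Rightarrow> real) \<Rightarrow> complex set" where
  "Omega k r = closure (diam_disk (r 1) (r k)) - (\<Union>j\<in>{1..k-1}. diam_disk (r j) (r (j+1)))"

end

theory Submission
  imports Defs
begin

(*
  Write p = A (x - p_1) ... (x - p_k) and h_i = prod_(l ~= i) (x - p_l). Lagrange interpolation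
  at the roots of p gives q = sum_i c_i h_i, and W(p, h_i) = A h_i^2, so W(p, q) = A sum_i c_i h_i^2.
  Interlacing forces all c_i to have the sign of the leading coefficient of q. Hence at a root z
  of W we get sum_i d_i / (z - p_i)^2 = 0 with all d_i > 0, so the points (z - p_i)^2 cannot all
  lie in one open half-plane {w. Re (u w) > 0}.
  For a < b and x = t a + (1 - t) b,
    Re (conj ((z - a)(z - b)) (z - x)^2)
      = (t^2 |z - a|^2 + (1 - t)^2 |z - b|^2) Re ((z - a) conj (z - b))
        + 2 t (1 - t) |z - a|^2 |z - b|^2,
  and Re ((z - a) conj (z - b)) is negative, zero or positive according as z lies inside, on or
  outside the circle with diameter [a, b]. If z lies outside the closed disk over [p_1, p_k], every
  p_i has 0 <= t <= 1 and the right-hand side is positive; if z lies in the disk over [p_j, p_(j+1)],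
  every p_i has t (1 - t) <= 0 and it is negative. Either way all (z - p_i)^2 lie in one open
  half-plane.
*)

lemma map_poly_of_real_add:
  "map_poly (of_real :: real \<Rightarrow> 'a::{real_algebra_1,comm_ring_1}) (p + q)
    = map_poly of_real p + map_poly of_real q"
  by (intro poly_eqI) (simp add: coeff_map_poly)

lemma map_poly_of_real_smult:
  "map_poly (of_real :: real \<Rightarrow> 'a::{real_algebra_1,comm_ring_1}) (smult c p)
    = smult (of_real c) (map_poly of_real p)"
  by (rule map_poly_smult) auto

lemma map_poly_of_real_mult:
  "map_poly (of_real :: real \<Rightarrow> 'a::{real_algebra_1,comm_ring_1}) (p * q)
    = map_poly of_real p * map_poly of_real q"
  by (induct p rule: pCons_induct)
     (simp_all add: map_poly_of_real_add map_poly_of_real_smult map_poly_pCons)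

lemma map_poly_of_real_sum:
  "map_poly (of_real :: real \<Rightarrow> 'a::{real_algebra_1,comm_ring_1}) (\<Sum>i\<in>A. f i)
    = (\<Sum>i\<in>A. map_poly of_real (f i))"
  by (induct A rule: infinite_finite_induct) (simp_all add: map_poly_of_real_add)

lemma map_poly_of_real_prod:
  "map_poly (of_real :: real \<Rightarrow> 'a::{real_algebra_1,comm_ring_1}) (\<Prod>i\<in>A. f i)
    = (\<Prod>i\<in>A. map_poly of_real (f i))"
  by (induct A rule: infinite_finite_induct) (simp_all add: map_poly_of_real_mult)

lemma map_poly_of_real_power:
  "map_poly (of_real :: real \<Rightarrow> 'a::{real_algebra_1,comm_ring_1}) (p ^ n)
    = map_poly of_real p ^ n"
  by (induct n) (simp_all add: map_poly_of_real_mult)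

lemma map_poly_of_real_linear:
  "map_poly (of_real :: real \<Rightarrow> 'a::{real_algebra_1,comm_ring_1}) [:-x, 1:]
    = [:-of_real x, 1:]"
  by (simp add: map_poly_pCons)

lemma smult_sum_right: "smult c (\<Sum>i\<in>A. f i) = (\<Sum>i\<in>A. smult c (f i))"
  using sum_distrib_left[of "[:c:]" f A] by simp

lemma wronskian_smult_left: "wronskian (smult c p) q = smult c (wronskian p q)"
  by (simp add: wronskian_def pderiv_smult smult_diff_right)

lemma wronskian_smult_right: "wronskian p (smult c q) = smult c (wronskian p q)"
  by (simp add: wronskian_def pderiv_smult smult_diff_right)

lemma wronskian_sum_right: "wronskian p (\<Sum>i\<in>A. f i) = (\<Sum>i\<in>A. wronskian p (f i))"
  by (induct A rule: infinite_finite_induct) (simp_all add: wronskian_def pderiv_add algebra_simps)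

lemma wronskian_linear_factor: "wronskian ([:-x, 1:] * h) h = h ^ 2"
proof -
  have "pderiv [:-x, 1:] = 1" by (simp add: pderiv_pCons)
  then show ?thesis
    unfolding wronskian_def pderiv_mult
    by (simp add: algebra_simps power2_eq_square del: mult_pCons_left)
qed

lemma poly_eq_smult_prod_roots:
  fixes p :: "'a::idom poly" and r :: "'b \<Rightarrow> 'a"
  assumes "finite I" "degree p = card I" "inj_on r I"
    and "\<And>i. i \<in> I \<Longrightarrow> poly p (r i) = 0"
  shows "p = smult (lead_coeff p) (\<Prod>i\<in>I. [:-r i, 1:])"
proof -
  let ?F = "\<Prod>i\<in>I. [:-r i, 1:]"
  have "degree ?F = card I" using assms(1) by (simp add: degree_prod_eq_sum_degree)
  moreover have "lead_coeff ?F = 1" by (simp add: lead_coeff_prod)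
  ultimately show ?thesis
    using assms by (intro poly_eqI_degree_lead_coeff[where A = "r ` I" and n = "card I"])
      (auto simp: card_image poly_prod)
qed

lemma lagrange_interpolation_prod_linear:
  fixes q :: "'a::field poly" and r :: "'b \<Rightarrow> 'a"
  assumes "finite I" "inj_on r I" "degree q < card I"
  defines "h i \<equiv> \<Prod>l\<in>I-{i}. [:-r l, 1:]"
  shows "q = (\<Sum>i\<in>I. smult (poly q (r i) / poly (h i) (r i)) (h i))"
proof (rule poly_eqI_degree[where A = "r ` I"])
  have h_at_root: "poly (h i) (r m) = 0 \<longleftrightarrow> i \<noteq> m" if "i \<in> I" "m \<in> I" for i m
    using that assms(1,2) by (auto simp: h_def poly_prod inj_on_eq_iff)
  fix x assume "x \<in> r ` I"
  then obtain m where m: "m \<in> I" "x = r m" by auto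
  have "poly (\<Sum>i\<in>I. smult (poly q (r i) / poly (h i) (r i)) (h i)) x
      = (\<Sum>i\<in>I. poly q (r i) / poly (h i) (r i) * poly (h i) (r m))"
    by (simp add: poly_sum m)
  also have "\<dots> = poly q (r m) / poly (h m) (r m) * poly (h m) (r m)"
  proof -
    have "(\<Sum>i\<in>I-{m}. poly q (r i) / poly (h i) (r i) * poly (h i) (r m)) = 0"
      by (rule sum.neutral) (use m h_at_root in auto)
    then show ?thesis by (simp add: sum.remove[OF assms(1) m(1)])
  qed
  finally show "poly q x = poly (\<Sum>i\<in>I. smult (poly q (r i) / poly (h i) (r i)) (h i)) x"
    using h_at_root[OF m(1) m(1)] m by simp
next
  have "degree (h i) \<le> card I - 1" if "i \<in> I" for i
    using that assms(1) by (simp add: h_def degree_prod_eq_sum_degree)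
  then have "degree (\<Sum>i\<in>I. smult (poly q (r i) / poly (h i) (r i)) (h i)) \<le> card I - 1"
    using assms(1) by (intro degree_sum_le) (auto intro: order_trans[OF degree_smult_le])
  then show "degree (\<Sum>i\<in>I. smult (poly q (r i) / poly (h i) (r i)) (h i)) < card (r ` I)"
    using assms by (simp add: card_image)
qed (use assms in \<open>simp add: card_image\<close>)

lemma wronskian_prod_linear_eq_sum_sq:
  fixes q :: "real poly" and r :: "'b \<Rightarrow> real"
  assumes "finite I" "inj_on r I" "degree q < card I"
  defines "h i \<equiv> \<Prod>l\<in>I-{i}. [:-r l, 1:]"
  shows "wronskian (\<Prod>i\<in>I. [:-r i, 1:]) q
    = (\<Sum>i\<in>I. smult (poly q (r i) / poly (h i) (r i)) (h i ^ 2))"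
proof -
  have prod_split: "(\<Prod>l\<in>I. [:-r l, 1:]) = [:-r i, 1:] * h i" if "i \<in> I" for i
    unfolding h_def using assms(1) that by (rule prod.remove)
  have "wronskian (\<Prod>l\<in>I. [:-r l, 1:]) q
      = wronskian (\<Prod>l\<in>I. [:-r l, 1:]) (\<Sum>i\<in>I. smult (poly q (r i) / poly (h i) (r i)) (h i))"
    using lagrange_interpolation_prod_linear[OF assms(1-3), folded h_def] by simp
  also have "\<dots> = (\<Sum>i\<in>I. smult (poly q (r i) / poly (h i) (r i)) (h i ^ 2))"
    unfolding wronskian_sum_right wronskian_smult_right
    by (intro sum.cong refl) (simp add: prod_split wronskian_linear_factor del: mult_pCons_left)
  finally show ?thesis .
qed

lemma interlacing_quotient_pos:
  fixes pr qr :: "nat \<Rightarrow> real"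
  assumes mono: "strict_mono_on {1..k} pr"
    and interlace: "\<And>j. j \<in> {1..k-1} \<Longrightarrow> pr j < qr j \<and> qr j < pr (j+1)"
    and i: "i \<in> {1..k}"
  shows "0 < (\<Prod>j\<in>{1..k-1}. pr i - qr j) / (\<Prod>l\<in>{1..k}-{i}. pr i - pr l)"
proof -
  \<comment> \<open>\<open>\<sigma>\<close> pairs \<open>qr j\<close> with its neighbour \<open>pr j\<close> or \<open>pr (j+1)\<close> on the same side
    of \<open>pr i\<close>.\<close>
  define \<sigma> where "\<sigma> j = (if j < i then j else j + 1)" for j :: nat
  have bij: "bij_betw \<sigma> {1..k-1} ({1..k}-{i})"
    by (rule bij_betw_byWitness[where f' = "\<lambda>l. if l < i then l else l - 1"])
      (use i in \<open>auto simp: \<sigma>_def\<close>)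
  have "(\<Prod>l\<in>{1..k}-{i}. pr i - pr l) = (\<Prod>j\<in>{1..k-1}. pr i - pr (\<sigma> j))"
    using prod.reindex_bij_betw[OF bij, of "\<lambda>l. pr i - pr l"] by simp
  then have "(\<Prod>j\<in>{1..k-1}. pr i - qr j) / (\<Prod>l\<in>{1..k}-{i}. pr i - pr l)
      = (\<Prod>j\<in>{1..k-1}. (pr i - qr j) / (pr i - pr (\<sigma> j)))"
    by (simp add: prod_dividef)
  also have "\<dots> > 0"
  proof (rule prod_pos)
    fix j assume j: "j \<in> {1..k-1}"
    show "0 < (pr i - qr j) / (pr i - pr (\<sigma> j))"
    proof (cases "j < i")
      case True
      then have "pr (j+1) \<le> pr i"
        using i j by (intro strict_mono_on_leD[OF mono]) auto
      then show ?thesis using True interlace[OF j] by (simp add: \<sigma>_def)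
    next
      case False
      then have "pr i \<le> pr j"
        using i j by (intro strict_mono_on_leD[OF mono]) auto
      then show ?thesis using False interlace[OF j] by (simp add: \<sigma>_def divide_neg_neg)
    qed
  qed
  finally show ?thesis .
qed

lemma wronskian_interlacing_eq_sum_sq:
  fixes p q :: "real poly" and pr qr :: "nat \<Rightarrow> real"
  assumes "k \<ge> 1" "degree p = k" "degree q = k - 1"
    and p_roots: "{x. poly p x = 0} = pr ` {1..k}" and pr_mono: "strict_mono_on {1..k} pr"
    and q_roots: "{x. poly q x = 0} = qr ` {1..k-1}" and "inj_on qr {1..k-1}"
    and interlace: "\<And>j. j \<in> {1..k-1} \<Longrightarrow> pr j < qr j \<and> qr j < pr (j+1)"
  obtains C d where "C \<noteq> 0" "\<And>i. i \<in> {1..k} \<Longrightarrow> 0 < d i"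
    "wronskian p q
      = smult C (\<Sum>i\<in>{1..k}. smult (d i) ((\<Prod>l\<in>{1..k}-{i}. [:-pr l, 1:]) ^ 2))"
proof -
  define h where "h i = (\<Prod>l\<in>{1..k}-{i}. [:-pr l, 1:])" for i
  define d where "d i = (\<Prod>j\<in>{1..k-1}. pr i - qr j) / (\<Prod>l\<in>{1..k}-{i}. pr i - pr l)" for i
  have pr_inj: "inj_on pr {1..k}" using pr_mono by (rule strict_mono_on_imp_inj_on)
  have "p \<noteq> 0" using assms(1,2) by auto
  have "q \<noteq> 0"
  proof
    assume "q = 0"
    then have "(UNIV :: real set) = qr ` {1..k-1}" using q_roots by simp
    then have "finite (UNIV :: real set)" by (metis finite_atLeastAtMost finite_imageI)
    then show False by (simp add: infinite_UNIV_char_0)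
  qed
  have p_eq: "p = smult (lead_coeff p) (\<Prod>i\<in>{1..k}. [:-pr i, 1:])"
    using pr_inj assms(2) p_roots by (intro poly_eq_smult_prod_roots) auto
  have q_eq: "q = smult (lead_coeff q) (\<Prod>j\<in>{1..k-1}. [:-qr j, 1:])"
    using assms(3,7) q_roots by (intro poly_eq_smult_prod_roots) auto
  have coeff_eq: "poly q (pr i) / poly (h i) (pr i) = d i * lead_coeff q" for i
    by (subst q_eq) (simp add: h_def d_def poly_prod)
  have "wronskian (\<Prod>i\<in>{1..k}. [:-pr i, 1:]) q
      = (\<Sum>i\<in>{1..k}. smult (d i * lead_coeff q) (h i ^ 2))"
    using wronskian_prod_linear_eq_sum_sq[of "{1..k}" pr q] pr_inj assms(1,3)
    unfolding h_def[symmetric] coeff_eq by simp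
  then have W: "wronskian p q
      = smult (lead_coeff p * lead_coeff q) (\<Sum>i\<in>{1..k}. smult (d i) (h i ^ 2))"
    by (subst p_eq) (simp add: wronskian_smult_left smult_sum_right mult_ac)
  have d_pos: "0 < d i" if "i \<in> {1..k}" for i
    unfolding d_def using pr_mono interlace that by (rule interlacing_quotient_pos)
  have "lead_coeff p * lead_coeff q \<noteq> 0" using \<open>p \<noteq> 0\<close> \<open>q \<noteq> 0\<close> by simp
  from this d_pos W show thesis unfolding h_def by (rule that)
qed

lemma sum_prod_sq_nonzero_if_half_plane:
  fixes E :: "'b \<Rightarrow> complex" and d :: "'b \<Rightarrow> real"
  assumes "finite I" "I \<noteq> {}" "\<And>i. i \<in> I \<Longrightarrow> 0 < d i"
    and "\<And>i. i \<in> I \<Longrightarrow> 0 < Re (u * E i ^ 2)"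
  shows "(\<Sum>i\<in>I. of_real (d i) * (\<Prod>l\<in>I-{i}. E l) ^ 2) \<noteq> 0"
proof -
  have E_nz: "E i \<noteq> 0" if "i \<in> I" for i using assms(4)[OF that] by auto
  define P where "P = (\<Prod>l\<in>I. E l)"
  define S where "S = (\<Sum>i\<in>I. of_real (d i) / E i ^ 2)"
  have "P \<noteq> 0" using E_nz assms(1) by (simp add: P_def)
  have "(\<Prod>l\<in>I-{i}. E l) = P / E i" if "i \<in> I" for i
    using prod.remove[OF assms(1) that, of E] E_nz[OF that] by (simp add: P_def field_simps)
  then have sum_eq: "(\<Sum>i\<in>I. of_real (d i) * (\<Prod>l\<in>I-{i}. E l) ^ 2) = P ^ 2 * S"
    unfolding S_def sum_distrib_left by (intro sum.cong) (simp_all add: power_divide)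
  have "Re (cnj u * S) = (\<Sum>i\<in>I. d i * (Re (u * E i ^ 2) / cmod (E i ^ 2) ^ 2))"
    unfolding S_def sum_distrib_left Re_sum
    by (intro sum.cong refl) (simp add: Re_divide' algebra_simps)
  also have "\<dots> > 0"
    using assms E_nz by (intro sum_pos) (auto intro!: mult_pos_pos divide_pos_pos)
  finally have "S \<noteq> 0" by auto
  with \<open>P \<noteq> 0\<close> show ?thesis unfolding sum_eq by simp
qed

lemma Re_mult_cnj_eq_dist_center_sq:
  fixes z :: complex and a b :: real
  shows "Re ((z - of_real a) * cnj (z - of_real b))
    = cmod (z - of_real ((a + b) / 2)) ^ 2 - ((b - a) / 2) ^ 2"
  unfolding cmod_power2 by (simp add: power2_eq_square field_simps)

lemma mem_diam_disk_iff:
  assumes "a \<le> b"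
  shows "z \<in> diam_disk a b \<longleftrightarrow> Re ((z - of_real a) * cnj (z - of_real b)) < 0"
proof -
  have "z \<in> diam_disk a b \<longleftrightarrow> \<not> ((b - a) / 2) ^ 2 \<le> cmod (z - of_real ((a + b) / 2)) ^ 2"
    using assms by (simp add: diam_disk_def dist_norm norm_minus_commute not_le)
  then show ?thesis unfolding Re_mult_cnj_eq_dist_center_sq by linarith
qed

lemma mem_closure_diam_disk_iff:
  assumes "a < b"
  shows "z \<in> closure (diam_disk a b) \<longleftrightarrow> Re ((z - of_real a) * cnj (z - of_real b)) \<le> 0"
proof -
  have "z \<in> closure (diam_disk a b) \<longleftrightarrow> cmod (z - of_real ((a + b) / 2)) ^ 2 \<le> ((b - a) / 2) ^ 2"
    using assms by (simp add: diam_disk_def dist_norm norm_minus_commute)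
  then show ?thesis unfolding Re_mult_cnj_eq_dist_center_sq by linarith
qed

lemma Re_cnj_mult_mult_sq_eq:
  fixes z :: complex and a b x :: real
  assumes "a < b"
  defines "t \<equiv> (b - x) / (b - a)"
  shows "Re (cnj ((z - a) * (z - b)) * (z - x) ^ 2)
    = (t ^ 2 * cmod (z - a) ^ 2 + (1 - t) ^ 2 * cmod (z - b) ^ 2) * Re ((z - a) * cnj (z - b))
      + 2 * t * (1 - t) * cmod (z - a) ^ 2 * cmod (z - b) ^ 2"
proof -
  have "t * (b - a) = b - x" using assms by (simp add: t_def)
  then have "x = t * a + (1 - t) * b" by algebra
  then have "of_real x = (of_real t * of_real a + of_real (1 - t) * of_real b :: complex)"
    by (metis of_real_add of_real_mult)
  then have shift: "z - of_real x = of_real t * (z - of_real a) + of_real (1 - t) * (z - of_real b)"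
    by (simp add: algebra_simps)
  show ?thesis unfolding shift cmod_power2 by (simp add: power2_eq_square algebra_simps)
qed

lemma Re_cnj_mult_mult_sq_pos_outside_diam_disk:
  fixes z :: complex and a b x :: real
  assumes "a < b" "z \<notin> closure (diam_disk a b)" "a \<le> x" "x \<le> b"
  shows "0 < Re (cnj ((z - a) * (z - b)) * (z - x) ^ 2)"
proof -
  define t where "t = (b - x) / (b - a)"
  have R: "0 < Re ((z - a) * cnj (z - b))"
    using mem_closure_diam_disk_iff[OF assms(1), of z] assms(2) by linarith
  then have "0 < cmod (z - a)" "0 < cmod (z - b)" by auto
  moreover have t: "0 \<le> t" "t \<le> 1" using assms by (auto simp: t_def field_simps)
  ultimately have "0 < t ^ 2 * cmod (z - a) ^ 2 + (1 - t) ^ 2 * cmod (z - b) ^ 2"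
    using sum_power2_gt_zero_iff[of "t * cmod (z - a)" "(1 - t) * cmod (z - b)"]
    by (cases "t = 0") (simp_all add: power_mult_distrib)
  with R have "0 < (t ^ 2 * cmod (z - a) ^ 2 + (1 - t) ^ 2 * cmod (z - b) ^ 2)
      * Re ((z - a) * cnj (z - b))"
    by simp
  moreover have "0 \<le> 2 * t * (1 - t) * cmod (z - a) ^ 2 * cmod (z - b) ^ 2" using t by simp
  ultimately show ?thesis
    unfolding Re_cnj_mult_mult_sq_eq[OF assms(1), of z x, folded t_def] by linarith
qed

lemma Re_cnj_mult_mult_sq_neg_inside_diam_disk:
  fixes z :: complex and a b x :: real
  assumes "z \<in> diam_disk a b" "x \<le> a \<or> b \<le> x"
  shows "Re (cnj ((z - a) * (z - b)) * (z - x) ^ 2) < 0"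
proof -
  define t where "t = (b - x) / (b - a)"
  have "0 < (b - a) / 2"
    using assms(1) unfolding diam_disk_def mem_ball by (rule le_less_trans[OF zero_le_dist])
  then have "a < b" by simp
  have R: "Re ((z - a) * cnj (z - b)) < 0"
    using mem_diam_disk_iff[of a b z] assms(1) \<open>a < b\<close> by simp
  then have "0 < cmod (z - a)" "0 < cmod (z - b)" by auto
  moreover have t: "t \<le> 0 \<or> 1 \<le> t" using assms(2) \<open>a < b\<close> by (auto simp: t_def field_simps)
  ultimately have "0 < t ^ 2 * cmod (z - a) ^ 2 + (1 - t) ^ 2 * cmod (z - b) ^ 2"
    using sum_power2_gt_zero_iff[of "t * cmod (z - a)" "(1 - t) * cmod (z - b)"]
    by (cases "t = 0") (simp_all add: power_mult_distrib)
  with R have "(t ^ 2 * cmod (z - a) ^ 2 + (1 - t) ^ 2 * cmod (z - b) ^ 2)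
      * Re ((z - a) * cnj (z - b)) < 0"
    by (simp add: mult_pos_neg)
  moreover have "2 * t * (1 - t) * cmod (z - a) ^ 2 * cmod (z - b) ^ 2 \<le> 0"
    using t by (auto simp: mult_nonpos_nonneg mult_nonneg_nonpos)
  ultimately show ?thesis
    unfolding Re_cnj_mult_mult_sq_eq[OF \<open>a < b\<close>, of z x, folded t_def] by linarith
qed

lemma no_half_plane_at_root_of_sum_sq:
  fixes r :: "'b \<Rightarrow> real" and d :: "'b \<Rightarrow> real"
  assumes "finite I" "I \<noteq> {}" "C \<noteq> 0" "\<And>i. i \<in> I \<Longrightarrow> 0 < d i"
    and "poly (map_poly of_real
      (smult C (\<Sum>i\<in>I. smult (d i) ((\<Prod>l\<in>I-{i}. [:-r l, 1:]) ^ 2)))) z = 0"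
  shows "\<nexists>u. \<forall>x\<in>r ` I. 0 < Re (u * (z - x) ^ 2)"
proof
  assume "\<exists>u. \<forall>x\<in>r ` I. 0 < Re (u * (z - x) ^ 2)"
  then obtain u where "\<forall>i\<in>I. 0 < Re (u * (z - r i) ^ 2)" by blast
  then have "(\<Sum>i\<in>I. of_real (d i) * (\<Prod>l\<in>I-{i}. z - r l) ^ 2) \<noteq> 0"
    using assms(1,2,4) by (intro sum_prod_sq_nonzero_if_half_plane[where u = u]) auto
  with assms(3,5) show False
    by (simp add: map_poly_of_real_smult map_poly_of_real_sum map_poly_of_real_power
        map_poly_of_real_prod map_poly_of_real_linear poly_sum poly_prod)
qed

lemma mem_closure_diam_disk_if_no_half_plane:
  fixes z :: complex and a b :: real and X :: "real set"
  assumes "a < b" "X \<subseteq> {a..b}" "\<nexists>u. \<forall>x\<in>X. 0 < Re (u * (z - x) ^ 2)"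
  shows "z \<in> closure (diam_disk a b)"
proof (rule ccontr)
  assume outside: "z \<notin> closure (diam_disk a b)"
  have "0 < Re (cnj ((z - a) * (z - b)) * (z - x) ^ 2)" if "x \<in> X" for x
    using assms(1) outside
    by (rule Re_cnj_mult_mult_sq_pos_outside_diam_disk) (use assms(2) that in auto)
  with assms(3) show False by blast
qed

lemma not_mem_diam_disk_if_no_half_plane:
  fixes z :: complex and a b :: real and X :: "real set"
  assumes "X \<inter> {a<..<b} = {}" "\<nexists>u. \<forall>x\<in>X. 0 < Re (u * (z - x) ^ 2)"
  shows "z \<notin> diam_disk a b"
proof
  assume inside: "z \<in> diam_disk a b"
  have "0 < Re (- cnj ((z - a) * (z - b)) * (z - x) ^ 2)" if "x \<in> X" for x
  proof -
    have "x \<le> a \<or> b \<le> x" using assms(1) that by auto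
    with inside have "Re (cnj ((z - a) * (z - b)) * (z - x) ^ 2) < 0"
      by (rule Re_cnj_mult_mult_sq_neg_inside_diam_disk)
    then show ?thesis by (simp only: mult_minus_left uminus_complex.sel neg_0_less_iff_less)
  qed
  with assms(2) show False by blast
qed

theorem theorem1:
  fixes p q :: "real poly" and k :: nat and pr qr :: "nat \<Rightarrow> real" and z :: complex
  assumes "k \<ge> 2"
    and "degree p = k" and "degree q = k - 1"
    and "{x. poly p x = 0} = pr ` {1..k}" and "strict_mono_on {1..k} pr"
    and "\<And>x. x \<in> {1..k} \<Longrightarrow> order (pr x) p = 1"
    and "{x. poly q x = 0} = qr ` {1..k-1}" and "strict_mono_on {1..k-1} qr"
    and "\<And>x. x \<in> {1..k-1} \<Longrightarrow> order (qr x) q = 1"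
    and "\<And>j. j \<in> {1..k-1} \<Longrightarrow> pr j < qr j \<and> qr j < pr (j+1)"
    and "poly (map_poly complex_of_real (wronskian p q)) z = 0"
  shows "z \<in> Omega k pr"
proof -
  have "k \<ge> 1" using assms(1) by simp
  then obtain C d where "C \<noteq> 0" "\<And>i. i \<in> {1..k} \<Longrightarrow> 0 < d i"
    and "wronskian p q
      = smult C (\<Sum>i\<in>{1..k}. smult (d i) ((\<Prod>l\<in>{1..k}-{i}. [:-pr l, 1:]) ^ 2))"
    using wronskian_interlacing_eq_sum_sq[of k p q pr qr] assms(2-5,7,10)
      strict_mono_on_imp_inj_on[OF assms(8)] by blast
  then have no_half_plane: "\<nexists>u. \<forall>x\<in>pr ` {1..k}. 0 < Re (u * (z - x) ^ 2)"
    using assms(1,11) by (intro no_half_plane_at_root_of_sum_sq) auto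
  have pr_le: "pr i \<le> pr j" if "i \<in> {1..k}" "j \<in> {1..k}" "i \<le> j" for i j
    using strict_mono_on_leD[OF assms(5)] that by blast
  have "pr 1 < pr k" using strict_mono_onD[OF assms(5)] assms(1) by simp
  moreover have "pr ` {1..k} \<subseteq> {pr 1..pr k}" using pr_le by auto
  ultimately have "z \<in> closure (diam_disk (pr 1) (pr k))"
    using no_half_plane by (rule mem_closure_diam_disk_if_no_half_plane)
  moreover have "z \<notin> diam_disk (pr j) (pr (j+1))" if j: "j \<in> {1..k-1}" for j
  proof (rule not_mem_diam_disk_if_no_half_plane[OF _ no_half_plane])
    have "pr i \<le> pr j \<or> pr (j+1) \<le> pr i" if "i \<in> {1..k}" for i
      using pr_le[of i j] pr_le[of "j+1" i] that j by (cases "i \<le> j") auto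
    then show "pr ` {1..k} \<inter> {pr j<..<pr (j+1)} = {}" by fastforce
  qed
  ultimately show ?thesis by (simp add: Omega_def)
qed

end
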